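(* Let $0<q<1$. Then \[ q^{2}(1+q)^{2}+q^{4}+\sum_{n=1}^{\infty}\frac{(1/2|q^{2})_{n}^{2}}{([n+1]_{q^{2}}!)^{2}}\,q^{4n+4}=\frac{(1+q)^{4}}{\pi_{q}}\,q^{9/4}. \]
   Context: Let $0<q<1$ and write $q^{x}=e^{x\log q}$. $[z]_{q^2}=\frac{1-q^{2z}}{1-q^2}$; $[0]_{q^2}!=1$, $[n]_{q^2}!=\prod_{k=1}^n[k]_{q^2}$; $(1/2|q^2)_n=\prod_{k=0}^{n-1}[1/2+k]_{q^2}$. With $(z;q)_\infty=\prod_{k\ge0}(1-zq^k)$, $\pi_q=(1-q^2)q^{1/4}\frac{(q^2;q^2)_\infty^2}{(q;q^2)_\infty^2}$. *)

theory Defs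
  imports "HOL-Analysis.Analysis"
begin

definition qnum2 :: "real \<Rightarrow> real \<Rightarrow> real" where
  "qnum2 q z = (1 - q powr (2 * z)) / (1 - q\<^sup>2)"

definition qfact2 :: "real \<Rightarrow> nat \<Rightarrow> real" where
  "qfact2 q n = (\<Prod>k=1..n. qnum2 q (real k))"

definition qpoch_half :: "real \<Rightarrow> nat \<Rightarrow> real" where
  "qpoch_half q n = (\<Prod>k<n. qnum2 q (1/2 + real k))"

definition qpoch_inf :: "real \<Rightarrow> real \<Rightarrow> real" where
  "qpoch_inf z q = (\<Prod>k. 1 - z * q ^ k)"

definition pi_q :: "real \<Rightarrow> real" where
  "pi_q q = (1 - q\<^sup>2) * q powr (1/4) * (qpoch_inf (q\<^sup>2) (q\<^sup>2))\<^sup>2 / (qpoch_inf q (q\<^sup>2))\<^sup>2"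

end

theory Submission
  imports Defs
begin

text \<open>With \<open>p = q\<^sup>2\<close>, the series is \<open>q\<^sup>2 (1 + q)\<^sup>2\<close> times the basic hypergeometric series
  \<open>\<^sub>2\<phi>\<^sub>1(q\<^sup>-\<^sup>1, q\<^sup>-\<^sup>1; q\<^sup>2; p, q\<^sup>4)\<close>, whose terms of index 0 and 1 give the two explicit summands.
  The q-Gauss sum \<open>\<^sub>2\<phi>\<^sub>1(a, a; c; p, c/a\<^sup>2) = (c/a; p)\<^sub>\<infinity>\<^sup>2 / ((c; p)\<^sub>\<infinity> (c/a\<^sup>2; p)\<^sub>\<infinity>)\<close>
  is proved classically: a termwise telescoping identity gives the functional equation
  \<open>(1 - c)(1 - c/a\<^sup>2) F(c) = (1 - c/a)\<^sup>2 F(c p)\<close>; iterating it \<open>K\<close> times and using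
  \<open>F(c p\<^sup>K) \<rightarrow> 1\<close> yields the infinite products.  At \<open>a = q\<^sup>-\<^sup>1, c = q\<^sup>2\<close> these are
  \<open>(q; q\<^sup>2)\<^sub>\<infinity>\<close> and \<open>(q\<^sup>2; q\<^sup>2)\<^sub>\<infinity>\<close> up to elementary factors, which is exactly what \<open>\<pi>\<^sub>q\<close> is made of.\<close>

definition qpoch :: "real \<Rightarrow> real \<Rightarrow> nat \<Rightarrow> real" where
  "qpoch z p n = (\<Prod>k<n. 1 - z * p ^ k)"

lemma qpoch_0 [simp]: "qpoch z p 0 = 1"
  by (simp add: qpoch_def)

lemma qpoch_Suc: "qpoch z p (Suc n) = qpoch z p n * (1 - z * p ^ n)"
  by (simp add: qpoch_def)

lemma qpoch_Suc_shift: "qpoch z p (Suc n) = (1 - z) * qpoch (z * p) p n"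
  unfolding qpoch_def prod.lessThan_Suc_shift by (simp add: mult.assoc)

lemma abs_mult_power_le:
  fixes c p :: real
  assumes "\<bar>p\<bar> \<le> 1"
  shows "\<bar>c * p ^ k\<bar> \<le> \<bar>c\<bar>"
  using assms by (simp add: abs_mult power_abs mult_left_le power_le_one)

lemma qpoch_nonzero:
  assumes "\<bar>z\<bar> < 1" "\<bar>p\<bar> \<le> 1"
  shows "qpoch z p n \<noteq> 0"
proof -
  have "z * p ^ k \<noteq> 1" for k
    using abs_mult_power_le[OF assms(2), of z k] assms(1) by auto
  then show ?thesis
    by (simp add: qpoch_def)
qed

lemma convergent_prod_qpoch:
  fixes z p :: real
  assumes "\<bar>p\<bar> < 1"
  shows "convergent_prod (\<lambda>k. 1 - z * p ^ k)"
proof -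
  have "summable (\<lambda>k. \<bar>z\<bar> * \<bar>p\<bar> ^ k)"
    by (intro summable_mult summable_geometric) (use assms in simp)
  then have "summable (\<lambda>k. norm ((1 - z * p ^ k) - 1))"
    by (simp add: abs_mult power_abs)
  then show ?thesis
    by (intro abs_convergent_prod_imp_convergent_prod summable_imp_abs_convergent_prod)
qed

lemma qpoch_tendsto_qpoch_inf:
  assumes "\<bar>p\<bar> < 1"
  shows "(\<lambda>n. qpoch z p n) \<longlonglongrightarrow> qpoch_inf z p"
  unfolding qpoch_def qpoch_inf_def LIMSEQ_lessThan_iff_atMost
  using convergent_prod_LIMSEQ[OF convergent_prod_qpoch[OF assms]] .

lemma qpoch_inf_nonzero:
  assumes "\<bar>z\<bar> < 1" "\<bar>p\<bar> < 1"
  shows "qpoch_inf z p \<noteq> 0"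
  unfolding qpoch_inf_def
proof (rule prodinf_nonzero[OF convergent_prod_qpoch[OF assms(2)]])
  fix k
  show "1 - z * p ^ k \<noteq> 0"
    using qpoch_nonzero[of z p "Suc k"] assms by (simp add: qpoch_Suc)
qed

lemma qpoch_inf_unfold:
  assumes "\<bar>p\<bar> < 1"
  shows "qpoch_inf z p = (1 - z) * qpoch_inf (z * p) p"
proof (rule LIMSEQ_unique)
  show "(\<lambda>n. qpoch z p (Suc n)) \<longlonglongrightarrow> qpoch_inf z p"
    using LIMSEQ_Suc[OF qpoch_tendsto_qpoch_inf[OF assms]] .
  show "(\<lambda>n. qpoch z p (Suc n)) \<longlonglongrightarrow> (1 - z) * qpoch_inf (z * p) p"
    unfolding qpoch_Suc_shift by (intro tendsto_intros qpoch_tendsto_qpoch_inf assms)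
qed

definition qgauss_term :: "real \<Rightarrow> real \<Rightarrow> real \<Rightarrow> nat \<Rightarrow> real" where
  "qgauss_term p a c n = qpoch a p n ^ 2 / (qpoch p p n * qpoch c p n) * (c / a\<^sup>2) ^ n"

lemma qgauss_term_0 [simp]: "qgauss_term p a c 0 = 1"
  by (simp add: qgauss_term_def)

definition qgauss_ratio :: "real \<Rightarrow> real \<Rightarrow> real \<Rightarrow> nat \<Rightarrow> real" where
  "qgauss_ratio p a c n = (1 - a * p ^ n)\<^sup>2 * (c / a\<^sup>2) / ((1 - p * p ^ n) * (1 - c * p ^ n))"

lemma qgauss_term_Suc: "qgauss_term p a c (Suc n) = qgauss_term p a c n * qgauss_ratio p a c n"
  by (simp add: qgauss_term_def qgauss_ratio_def qpoch_Suc power_mult_distrib mult_ac)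

lemma qgauss_term_shift:
  assumes p: "0 < p" "p < 1" and c: "\<bar>c\<bar> < 1"
  shows "qgauss_term p a (c * p) n * (1 - c * p ^ n) = qgauss_term p a c n * (1 - c) * p ^ n"
proof -
  have nz: "1 - c \<noteq> 0" "1 - c * p ^ n \<noteq> 0" "qpoch p p n \<noteq> 0" "qpoch c p n \<noteq> 0"
    using p c abs_mult_power_le[of p c n] by (auto simp: qpoch_nonzero)
  have shift: "qpoch (c * p) p n = qpoch c p n * (1 - c * p ^ n) / (1 - c)"
    using qpoch_Suc_shift[of c p n] nz by (simp add: qpoch_Suc field_simps)
  define X where "X = qpoch a p n ^ 2 * (c / a\<^sup>2) ^ n / qpoch p p n"
  have t: "qgauss_term p a c n = X / qpoch c p n"
    by (simp add: qgauss_term_def X_def)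
  have tp: "qgauss_term p a (c * p) n = X * p ^ n / qpoch (c * p) p n"
    by (simp add: qgauss_term_def X_def power_mult_distrib power_divide mult_ac)
  show ?thesis
    unfolding t tp shift using nz by (simp add: field_simps)
qed

lemma qgauss_telescope_step:
  assumes p: "0 < p" "p < 1" and c: "\<bar>c\<bar> < 1" and a: "a \<noteq> 0"
  shows "(1 - c) * (1 - c / a\<^sup>2) * qgauss_term p a c n - (1 - c / a)\<^sup>2 * qgauss_term p a (c * p) n
       = (1 - c) * ((1 - p ^ n) * qgauss_term p a c n - (1 - p ^ Suc n) * qgauss_term p a c (Suc n))"
proof -
  define t y where "t = qgauss_term p a c n" and "y = p ^ n"
  have "\<bar>c * y\<bar> < 1" "p * y < 1"
    using p c abs_mult_power_le[of p c n] by (simp_all add: y_def power_less_one_iff flip: power_Suc)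
  then have nz: "1 - c * y \<noteq> 0" "1 - p * y \<noteq> 0"
    by auto
  have tp: "qgauss_term p a (c * p) n = t * (1 - c) * y / (1 - c * y)"
    using qgauss_term_shift[OF p c, of a n] nz by (simp add: t_def y_def field_simps)
  have ts: "qgauss_term p a c (Suc n) = t * ((1 - a * y)\<^sup>2 * (c / a\<^sup>2) / ((1 - p * y) * (1 - c * y)))"
    by (simp add: qgauss_term_Suc qgauss_ratio_def t_def y_def)
  have cancel: "(1 - p * y) * (t * (x / ((1 - p * y) * (1 - c * y)))) = t * (x / (1 - c * y))" for x
    using nz(2) by simp
  have core: "(1 - c / a\<^sup>2) - (1 - c / a)\<^sup>2 * y / (1 - c * y)
      = (1 - y) - (1 - a * y)\<^sup>2 * (c / a\<^sup>2) / (1 - c * y)"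
    using a nz by (simp add: field_simps) algebra
  have "(1 - c) * (1 - c / a\<^sup>2) * t - (1 - c / a)\<^sup>2 * (t * (1 - c) * y / (1 - c * y))
      = (1 - c) * t * ((1 - c / a\<^sup>2) - (1 - c / a)\<^sup>2 * y / (1 - c * y))"
    by (simp add: algebra_simps)
  also have "\<dots> = (1 - c) * ((1 - y) * t - (1 - p * y) * (t * ((1 - a * y)\<^sup>2 * (c / a\<^sup>2) / ((1 - p * y) * (1 - c * y)))))"
    unfolding core cancel by (simp add: algebra_simps)
  finally show ?thesis
    unfolding tp ts t_def[symmetric] y_def[symmetric] power_Suc .
qed

lemma qgauss_telescope:
  assumes p: "0 < p" "p < 1" and c: "\<bar>c\<bar> < 1" and a: "a \<noteq> 0"
  shows "(1 - c) * (1 - c / a\<^sup>2) * (\<Sum>n<N. qgauss_term p a c n)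
           - (1 - c / a)\<^sup>2 * (\<Sum>n<N. qgauss_term p a (c * p) n)
       = - (1 - c) * (1 - p ^ N) * qgauss_term p a c N"
proof (induction N)
  case (Suc N)
  then show ?case
    using qgauss_telescope_step[OF p c a, of N] by (simp add: algebra_simps)
qed simp

lemma summable_qgauss_term:
  assumes p: "0 < p" "p < 1" and c: "\<bar>c\<bar> < 1" "\<bar>c\<bar> < a\<^sup>2"
  shows "summable (qgauss_term p a c)"
proof -
  have "(\<lambda>n. \<bar>qgauss_ratio p a c n\<bar>) \<longlonglongrightarrow> \<bar>(1 - a * 0)\<^sup>2 * (c / a\<^sup>2) / ((1 - p * 0) * (1 - c * 0))\<bar>"
    unfolding qgauss_ratio_def by (intro tendsto_intros LIMSEQ_power_zero) (use p in auto)
  then have lim: "(\<lambda>n. \<bar>qgauss_ratio p a c n\<bar>) \<longlonglongrightarrow> \<bar>c\<bar> / a\<^sup>2"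
    by (simp add: abs_divide)
  have "\<bar>c\<bar> / a\<^sup>2 < 1"
    using c by (simp add: divide_less_eq)
  then obtain r where r: "\<bar>c\<bar> / a\<^sup>2 < r" "r < 1"
    using dense by blast
  obtain N where N: "\<And>n. N \<le> n \<Longrightarrow> \<bar>qgauss_ratio p a c n\<bar> < r"
    using order_tendstoD(2)[OF lim r(1)] by (auto simp: eventually_sequentially)
  show ?thesis
  proof (rule summable_ratio_test[OF r(2)])
    fix n
    assume "N \<le> n"
    have "norm (qgauss_term p a c (Suc n)) = \<bar>qgauss_ratio p a c n\<bar> * norm (qgauss_term p a c n)"
      by (simp add: qgauss_term_Suc abs_mult)
    also have "\<dots> \<le> r * norm (qgauss_term p a c n)"
      using N[OF \<open>N \<le> n\<close>] by (intro mult_right_mono) auto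
    finally show "norm (qgauss_term p a c (Suc n)) \<le> r * norm (qgauss_term p a c n)" .
  qed
qed

lemma qgauss_recurrence:
  assumes p: "0 < p" "p < 1" and c: "\<bar>c\<bar> < 1" "\<bar>c\<bar> < a\<^sup>2"
  shows "(1 - c) * (1 - c / a\<^sup>2) * suminf (qgauss_term p a c)
       = (1 - c / a)\<^sup>2 * suminf (qgauss_term p a (c * p))"
proof -
  have a: "a \<noteq> 0"
    using c by auto
  have "\<bar>c * p\<bar> \<le> \<bar>c\<bar>"
    using abs_mult_power_le[of p c 1] p by simp
  then have sums: "summable (qgauss_term p a c)" "summable (qgauss_term p a (c * p))"
    using p c by (auto intro!: summable_qgauss_term)
  have "(\<lambda>N. - (1 - c) * (1 - p ^ N) * qgauss_term p a c N) \<longlonglongrightarrow> - (1 - c) * (1 - 0) * 0"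
    using p by (intro tendsto_intros LIMSEQ_power_zero summable_LIMSEQ_zero sums) auto
  moreover have "(\<lambda>N. - (1 - c) * (1 - p ^ N) * qgauss_term p a c N) \<longlonglongrightarrow>
      (1 - c) * (1 - c / a\<^sup>2) * suminf (qgauss_term p a c) - (1 - c / a)\<^sup>2 * suminf (qgauss_term p a (c * p))"
    unfolding qgauss_telescope[OF p c(1) a, symmetric]
    by (intro tendsto_intros summable_LIMSEQ sums)
  ultimately show ?thesis
    using LIMSEQ_unique by fastforce
qed

lemma abs_qgauss_ratio_le:
  assumes p: "0 < p" "p < 1" and a: "a \<noteq> 0" and c: "\<bar>c\<bar> \<le> d" "d < 1"
  shows "\<bar>qgauss_ratio p a c n\<bar> \<le> (1 + \<bar>a\<bar>)\<^sup>2 / (a\<^sup>2 * (1 - p) * (1 - d)) * \<bar>c\<bar>"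
proof -
  have "\<bar>1 - a * p ^ n\<bar> \<le> 1 + \<bar>a\<bar>"
    using abs_mult_power_le[of p a n] p by linarith
  then have num: "(1 - a * p ^ n)\<^sup>2 \<le> (1 + \<bar>a\<bar>)\<^sup>2"
    by (metis abs_ge_zero abs_le_square_iff abs_of_nonneg add_nonneg_nonneg zero_le_one)
  have "p * p ^ n \<le> p"
    using p by (simp add: mult_left_le power_le_one)
  then have den1: "1 - p \<le> 1 - p * p ^ n" and "0 < 1 - p * p ^ n" and "p * p ^ n < 1"
    using p by linarith+
  have den2: "1 - d \<le> \<bar>1 - c * p ^ n\<bar>"
    using abs_mult_power_le[of p c n] p c by linarith
  have "\<bar>qgauss_ratio p a c n\<bar>
      = (1 - a * p ^ n)\<^sup>2 * \<bar>c\<bar> / (a\<^sup>2 * ((1 - p * p ^ n) * \<bar>1 - c * p ^ n\<bar>))"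
    using \<open>0 < 1 - p * p ^ n\<close> by (simp add: qgauss_ratio_def abs_mult abs_divide)
  also have "\<dots> \<le> (1 + \<bar>a\<bar>)\<^sup>2 * \<bar>c\<bar> / (a\<^sup>2 * ((1 - p) * (1 - d)))"
    using num den1 den2 \<open>p * p ^ n < 1\<close> p c a
    by (intro frac_le mult_right_mono mult_left_mono mult_mono mult_pos_pos) auto
  finally show ?thesis
    by (simp add: mult_ac)
qed

lemma qgauss_term_bound:
  assumes p: "0 < p" "p < 1" and a: "a \<noteq> 0" and c: "\<bar>c\<bar> \<le> d" "d < 1"
  shows "\<bar>qgauss_term p a c n\<bar> \<le> ((1 + \<bar>a\<bar>)\<^sup>2 / (a\<^sup>2 * (1 - p) * (1 - d)) * \<bar>c\<bar>) ^ n"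
proof (induction n)
  case (Suc n)
  show ?case
    unfolding qgauss_term_Suc abs_mult power_Suc2
    by (rule mult_mono[OF Suc.IH abs_qgauss_ratio_le[OF p a c]]) (use p c in auto)
qed simp

lemma abs_suminf_diff_head_le:
  fixes f :: "nat \<Rightarrow> real"
  assumes f: "\<And>n. \<bar>f n\<bar> \<le> r ^ n" and r: "0 \<le> r" "r < 1"
  shows "\<bar>suminf f - f 0\<bar> \<le> r / (1 - r)"
proof -
  have geom: "summable (\<lambda>n. r ^ n)"
    using r by simp
  then have "summable f"
    by (rule summable_comparison_test') (use f in simp)
  then have "suminf f - f 0 = (\<Sum>n. f (Suc n))"
    by (simp add: suminf_split_head)
  also have "\<bar>\<dots>\<bar> \<le> (\<Sum>n. r * r ^ n)"
    using norm_suminf_le[of "\<lambda>n. f (Suc n)" "\<lambda>n. r * r ^ n"] f[of "Suc _"] summable_mult[OF geom, of r]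
    by simp
  also have "\<dots> = r / (1 - r)"
    using r suminf_geometric[of r] by (simp add: suminf_mult)
  finally show ?thesis .
qed

lemma qgauss_sum_tendsto_one:
  assumes p: "0 < p" "p < 1" and c: "\<bar>c\<bar> < 1" "\<bar>c\<bar> < a\<^sup>2"
  shows "(\<lambda>K. suminf (qgauss_term p a (c * p ^ K))) \<longlonglongrightarrow> 1"
proof -
  have a: "a \<noteq> 0"
    using c by auto
  define M where "M = (1 + \<bar>a\<bar>)\<^sup>2 / (a\<^sup>2 * (1 - p) * (1 - \<bar>c\<bar>))"
  define r where "r K = M * \<bar>c * p ^ K\<bar>" for K
  have M: "0 \<le> M"
    using p c by (simp add: M_def)
  have "(\<lambda>K. M * (\<bar>c\<bar> * p ^ K)) \<longlonglongrightarrow> M * (\<bar>c\<bar> * 0)"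
    using p by (intro tendsto_intros LIMSEQ_power_zero) auto
  moreover have "r = (\<lambda>K. M * (\<bar>c\<bar> * p ^ K))"
    using p by (simp add: r_def abs_mult fun_eq_iff)
  ultimately have r0: "r \<longlonglongrightarrow> 0"
    by simp
  have "\<forall>\<^sub>F K in sequentially. r K < 1"
    using order_tendstoD(2)[OF r0] by simp
  then have "\<forall>\<^sub>F K in sequentially. norm (suminf (qgauss_term p a (c * p ^ K)) - 1) \<le> r K / (1 - r K)"
  proof (rule eventually_mono)
    fix K
    assume "r K < 1"
    have "\<bar>c * p ^ K\<bar> \<le> \<bar>c\<bar>"
      using abs_mult_power_le[of p c K] p by simp
    then have "\<bar>qgauss_term p a (c * p ^ K) n\<bar> \<le> r K ^ n" for n
      using qgauss_term_bound[OF p a _ c(1)] by (simp only: M_def[symmetric] r_def)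
    then show "norm (suminf (qgauss_term p a (c * p ^ K)) - 1) \<le> r K / (1 - r K)"
      using abs_suminf_diff_head_le[of "qgauss_term p a (c * p ^ K)" "r K"] \<open>r K < 1\<close> M
      by (simp add: r_def)
  qed
  moreover have "(\<lambda>K. r K / (1 - r K)) \<longlonglongrightarrow> 0 / (1 - 0)"
    by (intro tendsto_intros r0) simp
  ultimately have "(\<lambda>K. suminf (qgauss_term p a (c * p ^ K)) - 1) \<longlonglongrightarrow> 0"
    by (rule Lim_null_comparison[OF _ tendsto_eq_rhs]) simp
  then show ?thesis
    by (rule LIM_zero_cancel)
qed

lemma qgauss_sum_iterate:
  assumes p: "0 < p" "p < 1" and c: "\<bar>c\<bar> < 1" "\<bar>c\<bar> < a\<^sup>2"
  shows "suminf (qgauss_term p a c) * (qpoch c p K * qpoch (c / a\<^sup>2) p K)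
       = qpoch (c / a) p K ^ 2 * suminf (qgauss_term p a (c * p ^ K))"
proof (induction K)
  case (Suc K)
  define c' where "c' = c * p ^ K"
  have "\<bar>c'\<bar> \<le> \<bar>c\<bar>"
    using abs_mult_power_le[of p c K] p by (simp add: c'_def)
  then have rec: "(1 - c') * (1 - c' / a\<^sup>2) * suminf (qgauss_term p a c')
      = (1 - c' / a)\<^sup>2 * suminf (qgauss_term p a (c' * p))"
    using c by (intro qgauss_recurrence p) auto
  have e: "qpoch c p (Suc K) = qpoch c p K * (1 - c')"
    "qpoch (c / a\<^sup>2) p (Suc K) = qpoch (c / a\<^sup>2) p K * (1 - c' / a\<^sup>2)"
    "qpoch (c / a) p (Suc K) = qpoch (c / a) p K * (1 - c' / a)"
    "c * p ^ Suc K = c' * p"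
    by (simp_all add: qpoch_Suc c'_def mult_ac)
  have "suminf (qgauss_term p a c) * (qpoch c p (Suc K) * qpoch (c / a\<^sup>2) p (Suc K))
      = suminf (qgauss_term p a c) * (qpoch c p K * qpoch (c / a\<^sup>2) p K) * ((1 - c') * (1 - c' / a\<^sup>2))"
    unfolding e by (simp add: mult_ac)
  also have "\<dots> = qpoch (c / a) p K ^ 2 * ((1 - c') * (1 - c' / a\<^sup>2) * suminf (qgauss_term p a c'))"
    unfolding Suc.IH c'_def by (simp add: mult_ac)
  also have "\<dots> = qpoch (c / a) p (Suc K) ^ 2 * suminf (qgauss_term p a (c * p ^ Suc K))"
    unfolding rec e by (simp add: power_mult_distrib mult_ac)
  finally show ?case .
qed simp

theorem qgauss_summation:
  assumes p: "0 < p" "p < 1" and c: "\<bar>c\<bar> < 1" "\<bar>c\<bar> < a\<^sup>2"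
  shows "suminf (qgauss_term p a c) = qpoch_inf (c / a) p ^ 2 / (qpoch_inf c p * qpoch_inf (c / a\<^sup>2) p)"
proof -
  have "\<bar>c / a\<^sup>2\<bar> < 1"
    using c by (simp add: abs_divide divide_less_eq)
  then have nz: "qpoch_inf c p * qpoch_inf (c / a\<^sup>2) p \<noteq> 0"
    using p c by (simp add: qpoch_inf_nonzero)
  have p': "\<bar>p\<bar> < 1"
    using p by simp
  have "(\<lambda>K. suminf (qgauss_term p a c) * (qpoch c p K * qpoch (c / a\<^sup>2) p K))
      \<longlonglongrightarrow> suminf (qgauss_term p a c) * (qpoch_inf c p * qpoch_inf (c / a\<^sup>2) p)"
    by (intro tendsto_intros qpoch_tendsto_qpoch_inf p')
  moreover have "(\<lambda>K. suminf (qgauss_term p a c) * (qpoch c p K * qpoch (c / a\<^sup>2) p K))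
      \<longlonglongrightarrow> qpoch_inf (c / a) p ^ 2 * 1"
    unfolding qgauss_sum_iterate[OF p c]
    by (intro tendsto_intros qpoch_tendsto_qpoch_inf p' qgauss_sum_tendsto_one p c)
  ultimately have "suminf (qgauss_term p a c) * (qpoch_inf c p * qpoch_inf (c / a\<^sup>2) p) = qpoch_inf (c / a) p ^ 2 * 1"
    by (rule LIMSEQ_unique)
  then show ?thesis
    using nz by (simp add: eq_divide_eq)
qed

lemma qnum2_of_nat:
  assumes "0 < q"
  shows "qnum2 q (real m) = (1 - q ^ (2 * m)) / (1 - q\<^sup>2)"
proof -
  have "2 * real m = real (2 * m)"
    by simp
  then show ?thesis
    using assms by (simp only: qnum2_def powr_realpow)
qed

lemma qnum2_half:
  assumes "0 < q"
  shows "qnum2 q (1/2 + real k) = (1 - q ^ (2 * k + 1)) / (1 - q\<^sup>2)"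
proof -
  have "2 * (1/2 + real k) = real (2 * k + 1)"
    by simp
  then show ?thesis
    using assms by (simp only: qnum2_def powr_realpow)
qed

lemma qfact2_eq_qpoch:
  assumes "0 < q"
  shows "qfact2 q n = qpoch (q\<^sup>2) (q\<^sup>2) n / (1 - q\<^sup>2) ^ n"
proof (induction n)
  case (Suc n)
  have "qfact2 q (Suc n) = qfact2 q n * qnum2 q (real (Suc n))"
    by (simp add: qfact2_def)
  also have "\<dots> = qpoch (q\<^sup>2) (q\<^sup>2) n / (1 - q\<^sup>2) ^ n * ((1 - (q\<^sup>2) ^ Suc n) / (1 - q\<^sup>2))"
    unfolding Suc.IH qnum2_of_nat[OF assms] power_mult ..
  finally show ?case
    by (simp add: qpoch_Suc)
qed (simp add: qfact2_def)

lemma qpoch_half_eq_qpoch: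
  assumes "0 < q"
  shows "qpoch_half q n = qpoch q (q\<^sup>2) n / (1 - q\<^sup>2) ^ n"
proof (induction n)
  case (Suc n)
  have "qpoch_half q (Suc n) = qpoch_half q n * qnum2 q (1/2 + real n)"
    by (simp add: qpoch_half_def)
  also have "\<dots> = qpoch q (q\<^sup>2) n / (1 - q\<^sup>2) ^ n * ((1 - q * (q\<^sup>2) ^ n) / (1 - q\<^sup>2))"
    unfolding Suc.IH qnum2_half[OF assms] by (simp add: power_add power_mult)
  finally show ?case
    by (simp add: qpoch_Suc mult.commute)
qed (simp add: qpoch_half_def)

lemma power2_div_inverse_eqs:
  fixes q :: real
  assumes "0 < q"
  shows "q\<^sup>2 / (1 / q) = q ^ 3" "q\<^sup>2 / (1 / q)\<^sup>2 = q ^ 4"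
  using assms by (simp_all add: power_divide field_simps eval_nat_numeral)

lemma qpoch_half_qfact2_summand:
  assumes q: "0 < q" "q < 1"
  shows "(qpoch_half q (Suc n))\<^sup>2 / (qfact2 q (Suc n + 1))\<^sup>2 * q ^ (4 * Suc n + 4)
       = q\<^sup>2 * (1 + q)\<^sup>2 * qgauss_term (q\<^sup>2) (1 / q) (q\<^sup>2) (Suc (Suc n))"
proof -
  define X Y D where "X = qpoch q (q\<^sup>2) (Suc n)" and "Y = qpoch (q\<^sup>2) (q\<^sup>2) (Suc (Suc n))"
    and "D = 1 - q\<^sup>2"
  have "q\<^sup>2 < 1"
    using q by (auto simp: power_less_one_iff)
  then have D: "D \<noteq> 0" and Y: "Y \<noteq> 0"
    using q by (simp_all add: D_def Y_def qpoch_nonzero)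
  have "qpoch (1 / q) (q\<^sup>2) (Suc (Suc n)) = (1 - 1 / q) * X"
    using q by (simp add: qpoch_Suc_shift X_def power2_eq_square)
  then have rhs: "qgauss_term (q\<^sup>2) (1 / q) (q\<^sup>2) (Suc (Suc n)) = (1 - 1 / q)\<^sup>2 * X\<^sup>2 / Y\<^sup>2 * (q ^ 4) ^ Suc (Suc n)"
    unfolding qgauss_term_def Y_def[symmetric] power2_div_inverse_eqs[OF q(1)]
    by (simp add: power_mult_distrib power2_eq_square)
  have pow: "q ^ (4 * Suc n + 4) = (q ^ 4) ^ Suc (Suc n)"
    by (simp add: power_add flip: power_mult)
  have lhs: "(qpoch_half q (Suc n))\<^sup>2 / (qfact2 q (Suc n + 1))\<^sup>2 = D\<^sup>2 * X\<^sup>2 / Y\<^sup>2"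
    using D Y[unfolded Y_def] by (simp add: qpoch_half_eq_qpoch[OF q(1)] qfact2_eq_qpoch[OF q(1)] X_def Y_def
        flip: D_def) (simp add: field_simps)
  show ?thesis
    unfolding lhs rhs pow using q D Y by (simp add: D_def field_simps power2_eq_square)
qed

lemma qgauss_term_one_at_q_inverse:
  assumes q: "0 < q" "q < 1"
  shows "q\<^sup>2 * (1 + q)\<^sup>2 * qgauss_term (q\<^sup>2) (1 / q) (q\<^sup>2) 1 = q ^ 4"
proof -
  define u v where "u = 1 - q" and "v = 1 + q"
  have t1: "qgauss_term (q\<^sup>2) (1 / q) (q\<^sup>2) 1 = (1 - 1 / q)\<^sup>2 * (q\<^sup>2 / (1 / q)\<^sup>2) / ((1 - q\<^sup>2) * (1 - q\<^sup>2))"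
    using qgauss_term_Suc[of "q\<^sup>2" "1 / q" "q\<^sup>2" 0] by (simp add: qgauss_ratio_def)
  have e: "1 - 1 / q = - u / q" "1 - q\<^sup>2 = u * v"
    using q by (simp_all add: u_def v_def field_simps power2_eq_square)
  have "u \<noteq> 0" "v \<noteq> 0"
    using q by (auto simp: u_def v_def)
  then show ?thesis
    unfolding t1 e power2_div_inverse_eqs[OF q(1)] v_def[symmetric]
    using q by (simp add: field_simps power2_eq_square eval_nat_numeral)
qed

lemma qgauss_sum_at_q_inverse:
  assumes q: "0 < q" "q < 1"
  shows "suminf (qgauss_term (q\<^sup>2) (1 / q) (q\<^sup>2))
       = (1 - q\<^sup>2) / (1 - q)\<^sup>2 * (qpoch_inf q (q\<^sup>2) / qpoch_inf (q\<^sup>2) (q\<^sup>2))\<^sup>2"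
proof -
  have q2: "0 < q\<^sup>2" "q\<^sup>2 < 1" and q34: "q ^ 3 < 1" "q ^ 4 < 1"
    using q by (auto simp: power_less_one_iff)
  have pw: "q * q\<^sup>2 = q ^ 3" "q\<^sup>2 * q\<^sup>2 = q ^ 4"
    by (simp_all add: eval_nat_numeral)
  have "\<bar>q\<^sup>2\<bar> < (1 / q)\<^sup>2"
    using q q34 by (simp add: power_divide field_simps eval_nat_numeral)
  then have sum: "suminf (qgauss_term (q\<^sup>2) (1 / q) (q\<^sup>2))
      = qpoch_inf (q ^ 3) (q\<^sup>2) ^ 2 / (qpoch_inf (q\<^sup>2) (q\<^sup>2) * qpoch_inf (q ^ 4) (q\<^sup>2))"
    using qgauss_summation[OF q2, of "q\<^sup>2" "1 / q"] q2 unfolding power2_div_inverse_eqs[OF q(1)] by simp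
  define u w where "u = 1 - q" and "w = 1 - q\<^sup>2"
  have unfold: "qpoch_inf q (q\<^sup>2) = u * qpoch_inf (q ^ 3) (q\<^sup>2)"
    "qpoch_inf (q\<^sup>2) (q\<^sup>2) = w * qpoch_inf (q ^ 4) (q\<^sup>2)"
    using q2 qpoch_inf_unfold[of "q\<^sup>2" q] qpoch_inf_unfold[of "q\<^sup>2" "q\<^sup>2"]
    unfolding u_def w_def pw by simp_all
  have "qpoch_inf (q ^ 3) (q\<^sup>2) \<noteq> 0" "qpoch_inf (q ^ 4) (q\<^sup>2) \<noteq> 0" "u \<noteq> 0" "w \<noteq> 0"
    using q q2 q34 by (simp_all add: qpoch_inf_nonzero u_def w_def)
  then show ?thesis
    unfolding sum unfold u_def[symmetric] w_def[symmetric] by (simp add: field_simps power2_eq_square)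
qed

lemma qpoch_half_series_eq_qgauss_sum:
  assumes q: "0 < q" "q < 1"
  shows "q\<^sup>2 * (1 + q)\<^sup>2 + q ^ 4
           + (\<Sum>n. (qpoch_half q (Suc n))\<^sup>2 / (qfact2 q (Suc n + 1))\<^sup>2 * q ^ (4 * Suc n + 4))
         = q\<^sup>2 * (1 + q)\<^sup>2 * suminf (qgauss_term (q\<^sup>2) (1 / q) (q\<^sup>2))"
proof -
  define F where "F = qgauss_term (q\<^sup>2) (1 / q) (q\<^sup>2)"
  have "summable F"
    unfolding F_def using q power2_div_inverse_eqs[OF q(1)]
    by (intro summable_qgauss_term) (auto simp: power_divide field_simps power_less_one_iff)
  then have "suminf F = (\<Sum>n. F (Suc (Suc n))) + F 0 + F 1"
    using suminf_split_initial_segment[of F 2] by (simp add: numeral_2_eq_2)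
  moreover have "(\<Sum>n. (qpoch_half q (Suc n))\<^sup>2 / (qfact2 q (Suc n + 1))\<^sup>2 * q ^ (4 * Suc n + 4))
      = q\<^sup>2 * (1 + q)\<^sup>2 * (\<Sum>n. F (Suc (Suc n)))"
    unfolding qpoch_half_qfact2_summand[OF q] F_def[symmetric]
    by (rule suminf_mult)
      (use summable_ignore_initial_segment[OF \<open>summable F\<close>, of 2] in \<open>simp add: numeral_2_eq_2\<close>)
  ultimately show ?thesis
    using qgauss_term_one_at_q_inverse[OF q] by (simp add: algebra_simps F_def)
qed

lemma quotient_by_pi_q:
  assumes q: "0 < q" "q < 1"
  shows "(1 + q) ^ 4 / pi_q q * q powr (9/4)
       = q\<^sup>2 * (1 + q)\<^sup>2 * ((1 - q\<^sup>2) / (1 - q)\<^sup>2 * (qpoch_inf q (q\<^sup>2) / qpoch_inf (q\<^sup>2) (q\<^sup>2))\<^sup>2)"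
proof -
  define u v r where "u = 1 - q" and "v = 1 + q" and "r = q powr (1/4)"
  have "q powr (9/4) = q powr (1/4 + 2)"
    by simp
  also have "\<dots> = r * q\<^sup>2"
    unfolding powr_add r_def using q by (simp add: powr_numeral)
  finally have e: "q powr (9/4) = r * q\<^sup>2" "1 - q\<^sup>2 = u * v"
    by (simp_all add: u_def v_def algebra_simps power2_eq_square)
  have "\<bar>q\<^sup>2\<bar> < 1"
    using q by (simp add: power_less_one_iff)
  then have "qpoch_inf q (q\<^sup>2) \<noteq> 0" "qpoch_inf (q\<^sup>2) (q\<^sup>2) \<noteq> 0" "u \<noteq> 0" "v \<noteq> 0" "r \<noteq> 0"
    using q by (simp_all add: qpoch_inf_nonzero u_def v_def r_def)
  then show ?thesis
    unfolding pi_q_def e u_def[symmetric] v_def[symmetric] r_def[symmetric]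
    by (simp add: field_simps power2_eq_square power4_eq_xxxx)
qed

theorem mainTheorem8:
  fixes q :: real
  assumes "0 < q" and "q < 1"
  shows "q\<^sup>2 * (1 + q)\<^sup>2 + q ^ 4
           + (\<Sum>n. (qpoch_half q (Suc n))\<^sup>2 / (qfact2 q (Suc n + 1))\<^sup>2 * q ^ (4 * Suc n + 4))
         = (1 + q) ^ 4 / pi_q q * q powr (9/4)"
  unfolding qpoch_half_series_eq_qgauss_sum[OF assms] qgauss_sum_at_q_inverse[OF assms]
    quotient_by_pi_q[OF assms] ..

end
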